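(* Let $D\subset S^2$ be a convex body of constant diameter $\delta$. Then every two diametral chords of $D$ intersect.
   Context: $S^2$ is the unit sphere in $E^3$; for non-antipodal points $a,b$, the arc $ab$ is the shorter great-circle arc joining them and $|ab|$ is its length. A set containing no pair of antipodes is convex if it contains the arc joining any two of its points; a closed convex set with non-empty interior is a convex body. If $D$ has diameter $\delta$, an arc $pq$ with $p,q\in D$ and $|pq|=\delta$ is called a diametral chord of $D$. $D$ is of constant diameter $\delta$ if for every $p\in\mathrm{bd}(D)$ there exists $p'\in\mathrm{bd}(D)$ with $|pp'|=\delta$. *)

theory Defs
  imports "HOL-Analysis.Analysis"
begin

type_synonym R3 = "real ^ 3"

definition S2 :: "R3 set" where
  "S2 = sphere 0 1"

definition sdist :: "R3 \<Rightarrow> R3 \<Rightarrow> real" where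
  "sdist a b = arccos (a \<bullet> b)"

text \<open>The shorter great-circle arc joining non-antipodal a, b of S^2:
  the radial projection of the Euclidean segment onto the sphere.\<close>
definition sarc :: "R3 \<Rightarrow> R3 \<Rightarrow> R3 set" where
  "sarc a b = (\<lambda>x. x /\<^sub>R norm x) ` closed_segment a b"

definition no_antipodes :: "R3 set \<Rightarrow> bool" where
  "no_antipodes D \<longleftrightarrow> (\<forall>p\<in>D. - p \<notin> D)"

definition sconvex :: "R3 set \<Rightarrow> bool" where
  "sconvex D \<longleftrightarrow> D \<subseteq> S2 \<and> no_antipodes D \<and> (\<forall>a\<in>D. \<forall>b\<in>D. sarc a b \<subseteq> D)"

definition sinterior :: "R3 set \<Rightarrow> R3 set" where
  "sinterior D = {p \<in> D. \<exists>e>0. S2 \<inter> ball p e \<subseteq> D}"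

definition sboundary :: "R3 set \<Rightarrow> R3 set" where
  "sboundary D = closure D \<inter> S2 - sinterior D"

definition sconvex_body :: "R3 set \<Rightarrow> bool" where
  "sconvex_body D \<longleftrightarrow> sconvex D \<and> closed D \<and> sinterior D \<noteq> {}"

definition sdiameter :: "R3 set \<Rightarrow> real" where
  "sdiameter D = Sup {sdist p q | p q. p \<in> D \<and> q \<in> D}"

definition const_diameter :: "R3 set \<Rightarrow> real \<Rightarrow> bool" where
  "const_diameter D \<delta> \<longleftrightarrow> sdiameter D = \<delta> \<and>
     (\<forall>p\<in>sboundary D. \<exists>p'\<in>sboundary D. sdist p p' = \<delta>)"

definition diametral_chord :: "R3 set \<Rightarrow> R3 set \<Rightarrow> bool" where
  "diametral_chord D C \<longleftrightarrow>
     (\<exists>p q. p \<in> D \<and> q \<in> D \<and> sdist p q = sdiameter D \<and> C = sarc p q)"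

end

theory Submission
  imports Defs
begin

(* Four points of S^2 are linearly dependent in R^3. If two diametral arcs pq and rs were
   disjoint, take a nontrivial relation a p + b q + c r + e s = 0 and look at the signs of the
   pairs (a, b) and (c, e). If both pairs change sign, normalising a p + c r = (-b) q + (-e) s
   gives a point where the arcs pr and qs cross; the triangle inequality together with the
   diameter bound forces that point onto both pq and rs. If only (a, b) changes sign, q lies on
   the arc from p to a point of rs, so that arc would be longer than the diameter. If neither
   changes sign, normalising a p + b q yields a common point of the two arcs or a pair of
   antipodes in D. *)

lemma sdist_commute: "sdist x y = sdist y x"
  by (simp add: sdist_def inner_commute)

lemma unit_inner_bounds:
  fixes x y :: "'a::real_inner"
  assumes "norm x = 1" "norm y = 1"
  shows "-1 \<le> x \<bullet> y" "x \<bullet> y \<le> 1"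
  using Cauchy_Schwarz_ineq2[of x y] assms by auto

lemma
  fixes x y :: R3
  assumes "norm x = 1" "norm y = 1"
  shows cos_sdist: "cos (sdist x y) = x \<bullet> y"
    and sdist_nonneg: "0 \<le> sdist x y"
    and sdist_le_pi: "sdist x y \<le> pi"
    and sin_sdist_nonneg: "0 \<le> sin (sdist x y)"
  using unit_inner_bounds[OF assms] arccos_bounded[of "x \<bullet> y"]
  by (auto simp: sdist_def intro!: sin_ge_zero)

lemma unit_inner_eq_1_iff:
  fixes x y :: "'a::real_inner"
  assumes "norm x = 1" "norm y = 1"
  shows "x \<bullet> y = 1 \<longleftrightarrow> x = y"
proof -
  have "x \<bullet> y = 1 - norm (x - y) ^ 2 / 2"
    using dot_norm_neg[of x y] assms by simp
  then show ?thesis by simp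
qed

lemma sdist_eq_0_iff:
  fixes x y :: R3
  assumes "norm x = 1" "norm y = 1"
  shows "sdist x y = 0 \<longleftrightarrow> x = y"
  using unit_inner_bounds[OF assms] unit_inner_eq_1_iff[OF assms]
  by (simp add: sdist_def arccos_eq_0_iff)

lemma sdist_less_pi:
  fixes x y :: R3
  assumes "norm x = 1" "norm y = 1" "x \<noteq> - y"
  shows "sdist x y < pi"
proof -
  have "x \<bullet> - y \<noteq> 1" using unit_inner_eq_1_iff[of x "- y"] assms by simp
  then show ?thesis
    using unit_inner_bounds[OF assms(1,2)] arccos_eq_pi_iff[of "x \<bullet> y"] sdist_le_pi[OF assms(1,2)]
    by (auto simp: sdist_def)
qed

lemma scaleR_norm_sgn: "norm x *\<^sub>R sgn x = (x::'a::real_normed_vector)"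
  by (cases "x = 0") (simp_all add: sgn_div_norm)

lemma sarc_eq_sgn_image: "sarc x y = sgn ` closed_segment x y"
  by (simp add: sarc_def sgn_div_norm)

lemma sarc_commute: "sarc x y = sarc y x"
  by (simp add: sarc_def closed_segment_commute)

lemma sgn_nonneg_comb_in_sarc:
  fixes x y :: R3
  assumes "0 \<le> l" "0 \<le> m" "0 < l + m"
  shows "sgn (l *\<^sub>R x + m *\<^sub>R y) \<in> sarc x y"
proof -
  define u where "u = m / (l + m)"
  have "(1 - u) *\<^sub>R x + u *\<^sub>R y = (1 / (l + m)) *\<^sub>R (l *\<^sub>R x + m *\<^sub>R y)"
    using assms(3) by (simp add: u_def field_simps scaleR_add_right)
  moreover have "0 \<le> u" "u \<le> 1" using assms by (auto simp: u_def)
  ultimately have "(1 / (l + m)) *\<^sub>R (l *\<^sub>R x + m *\<^sub>R y) \<in> closed_segment x y"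
    unfolding closed_segment_def by (metis (mono_tags, lifting) mem_Collect_eq)
  moreover have "sgn ((1 / (l + m)) *\<^sub>R (l *\<^sub>R x + m *\<^sub>R y)) = sgn (l *\<^sub>R x + m *\<^sub>R y)"
    using assms(3) by (simp add: sgn_scaleR)
  ultimately show ?thesis unfolding sarc_eq_sgn_image by (metis image_eqI)
qed

lemma sarc_nonneg_combE:
  assumes "z \<in> sarc x y"
  obtains l m where "0 \<le> l" "0 \<le> m" "l + m = 1" "z = sgn (l *\<^sub>R x + m *\<^sub>R y)"
proof -
  obtain u where "0 \<le> u" "u \<le> 1" "z = sgn ((1 - u) *\<^sub>R x + u *\<^sub>R y)"
    using assms unfolding sarc_eq_sgn_image closed_segment_def by blast
  then show thesis using that[of "1 - u" u] by simp
qed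

lemma
  fixes x y :: R3
  shows left_in_sarc: "norm x = 1 \<Longrightarrow> x \<in> sarc x y"
    and right_in_sarc: "norm y = 1 \<Longrightarrow> y \<in> sarc x y"
  using sgn_nonneg_comb_in_sarc[of 1 0 x y] sgn_nonneg_comb_in_sarc[of 0 1 x y]
  by (simp_all add: sgn_div_norm)

lemma nonneg_comb_eq_0_iff:
  fixes x y :: "'a::real_normed_vector"
  assumes "norm x = 1" "norm y = 1" "x \<noteq> - y" "0 \<le> l" "0 \<le> m"
  shows "l *\<^sub>R x + m *\<^sub>R y = 0 \<longleftrightarrow> l = 0 \<and> m = 0"
proof
  assume "l *\<^sub>R x + m *\<^sub>R y = 0"
  then have lx: "l *\<^sub>R x = - (m *\<^sub>R y)" by (simp add: add_eq_0_iff)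
  then have "norm (l *\<^sub>R x) = norm (m *\<^sub>R y)" by (metis norm_minus_cancel)
  then have "l = m" using assms by simp
  with lx assms(3) show "l = 0 \<and> m = 0"
    by (metis scaleR_cancel_left scaleR_minus_right)
qed simp

lemma antiparallel_if_inner_le:
  fixes x y :: "'a::real_inner"
  assumes "x \<bullet> y \<le> - (norm x * norm y)"
  shows "norm y *\<^sub>R x + norm x *\<^sub>R y = 0"
proof -
  have "(- x) \<bullet> y = norm (- x) * norm y"
    using assms Cauchy_Schwarz_ineq2[of "- x" y] by simp
  then have "norm x *\<^sub>R y = norm y *\<^sub>R (- x)"
    unfolding norm_cauchy_schwarz_eq by simp
  then show ?thesis by simp
qed

lemma inner_eq_neg_norm_mult_if_nonneg_comb_eq_0:
  fixes x y :: "'a::real_inner"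
  assumes "0 \<le> a" "0 \<le> b" "a \<noteq> 0 \<or> b \<noteq> 0" "a *\<^sub>R x + b *\<^sub>R y = 0"
  shows "x \<bullet> y = - (norm x * norm y)"
proof (cases "a = 0")
  case True
  then show ?thesis using assms by simp
next
  case False
  have ax: "a *\<^sub>R x = - (b *\<^sub>R y)" using assms(4) by (simp add: add_eq_0_iff)
  have "a * (x \<bullet> y) = - (b * norm y ^ 2)"
    using arg_cong[OF ax, of "\<lambda>v. v \<bullet> y"] by (simp add: power2_norm_eq_inner)
  moreover have "a * norm x = b * norm y"
    using arg_cong[OF ax, of norm] assms(1,2) by simp
  ultimately have "a * (x \<bullet> y) = a * - (norm x * norm y)"
    by (simp add: power2_eq_square algebra_simps)
  then show ?thesis using False by (metis mult_cancel_left)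
qed

definition tangent_component :: "'a::real_inner \<Rightarrow> 'a \<Rightarrow> 'a" where
  "tangent_component z p = p - (p \<bullet> z) *\<^sub>R z"

lemma inner_tangent_components:
  fixes p q z :: "'a::real_inner"
  assumes "norm z = 1"
  shows "p \<bullet> q = (z \<bullet> p) * (z \<bullet> q) + tangent_component z p \<bullet> tangent_component z q"
  using assms
  by (simp add: tangent_component_def inner_diff_left inner_diff_right dot_square_norm
      inner_commute[of p z] inner_commute[of q z])

lemma tangent_component_nonneg_comb:
  fixes p r z :: "'a::real_inner"
  assumes "norm z = 1" "a *\<^sub>R p + g *\<^sub>R r = n *\<^sub>R z"
  shows "a *\<^sub>R tangent_component z p + g *\<^sub>R tangent_component z r = 0"
proof -
  have "a *\<^sub>R tangent_component z p + g *\<^sub>R tangent_component z r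
      = (a *\<^sub>R p + g *\<^sub>R r) - ((a *\<^sub>R p + g *\<^sub>R r) \<bullet> z) *\<^sub>R z"
    by (simp add: tangent_component_def algebra_simps inner_add_left)
  then show ?thesis using assms by (simp add: dot_square_norm)
qed

lemma norm_tangent_component:
  fixes p z :: R3
  assumes "norm p = 1" "norm z = 1"
  shows "norm (tangent_component z p) = sin (sdist z p)"
proof -
  have "norm (tangent_component z p) ^ 2 = 1 - (z \<bullet> p) ^ 2"
    using inner_tangent_components[OF assms(2), of p p] assms
    by (simp add: power2_norm_eq_inner inner_commute power2_eq_square dot_square_norm)
  then have "norm (tangent_component z p) = sqrt (1 - (z \<bullet> p) ^ 2)"
    by (metis norm_ge_zero real_sqrt_unique)
  also have "\<dots> = sin (sdist z p)"
    using unit_inner_bounds[OF assms(2,1)] by (simp add: sdist_def sin_arccos)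
  finally show ?thesis .
qed

lemma inner_eq_cos_sdist_tangent:
  fixes p q z :: R3
  assumes "norm p = 1" "norm q = 1" "norm z = 1"
  shows "p \<bullet> q = cos (sdist z p) * cos (sdist z q) + tangent_component z p \<bullet> tangent_component z q"
  using inner_tangent_components[OF assms(3), of p q] cos_sdist[OF assms(3,1)] cos_sdist[OF assms(3,2)]
  by simp

lemma sdist_triangle:
  fixes p q z :: R3
  assumes p: "norm p = 1" and q: "norm q = 1" and z: "norm z = 1"
  shows "sdist p q \<le> sdist p z + sdist z q"
proof (cases "sdist z p + sdist z q \<le> pi")
  case True
  define P Q where "P = tangent_component z p" and "Q = tangent_component z q"
  have "- (P \<bullet> Q) \<le> norm P * norm Q" using Cauchy_Schwarz_ineq2[of P Q] by linarith
  then have "cos (sdist z p + sdist z q) \<le> p \<bullet> q"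
    using inner_eq_cos_sdist_tangent[OF p q z] norm_tangent_component[OF p z] norm_tangent_component[OF q z]
    by (simp add: P_def Q_def cos_add)
  then have "arccos (p \<bullet> q) \<le> arccos (cos (sdist z p + sdist z q))"
    using unit_inner_bounds[OF p q] by (intro arccos_le_arccos) auto
  also have "\<dots> = sdist z p + sdist z q"
    using True sdist_nonneg[OF z p] sdist_nonneg[OF z q] by (simp add: arccos_cos)
  finally show ?thesis by (simp add: sdist_def inner_commute[of p z])
next
  case False
  then show ?thesis using sdist_le_pi[OF p q] by (simp add: sdist_commute[of p z])
qed

lemma sarc_if_sdist_sum_le:
  fixes p q z :: R3
  assumes p: "norm p = 1" and q: "norm q = 1" and z: "norm z = 1" and "p \<noteq> - q"
    and le: "sdist p z + sdist z q \<le> sdist p q"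
  shows "z \<in> sarc p q"
proof -
  define A B P Q where "A = sdist z p" and "B = sdist z q"
    and "P = tangent_component z p" and "Q = tangent_component z q"
  have A: "0 \<le> A" "0 \<le> sin A" and B: "0 \<le> B" "0 \<le> sin B"
    using sdist_nonneg sin_sdist_nonneg p q z by (auto simp: A_def B_def)
  have AB: "A + B < pi"
    using le sdist_less_pi[OF p q \<open>p \<noteq> - q\<close>] by (simp add: A_def B_def sdist_commute[of p z])
  have "cos (sdist p q) \<le> cos (A + B)"
    using le A B sdist_le_pi[OF p q]
    by (intro cos_monotone_0_pi_le) (auto simp: A_def B_def sdist_commute[of p z])
  then have "P \<bullet> Q \<le> - (norm P * norm Q)"
    using inner_eq_cos_sdist_tangent[OF p q z] norm_tangent_component[OF p z] norm_tangent_component[OF q z]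
    by (simp add: A_def B_def P_def Q_def cos_sdist[OF p q] cos_add)
  then have "norm Q *\<^sub>R P + norm P *\<^sub>R Q = 0" by (rule antiparallel_if_inner_le)
  then have "sin B *\<^sub>R P + sin A *\<^sub>R Q = 0"
    using norm_tangent_component[OF p z] norm_tangent_component[OF q z]
    by (simp add: A_def B_def P_def Q_def)
  then have comb: "sin B *\<^sub>R p + sin A *\<^sub>R q = sin (A + B) *\<^sub>R z"
    using cos_sdist[OF z p] cos_sdist[OF z q]
    by (simp add: A_def B_def P_def Q_def tangent_component_def sin_add algebra_simps inner_commute)
  show ?thesis
  proof (cases "A + B = 0")
    case True
    then have "z = p" using A B sdist_eq_0_iff[OF z p] by (simp add: A_def)
    then show ?thesis using left_in_sarc[OF p] by simp
  next
    case False
    then have sin_pos: "0 < sin (A + B)" using A B AB by (intro sin_gt_zero) auto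
    then have "0 < sin B + sin A"
      using A B by (cases "sin A = 0 \<and> sin B = 0") (auto simp: sin_add)
    moreover have "z = sgn (sin B *\<^sub>R p + sin A *\<^sub>R q)"
      using comb sin_pos z by (simp add: sgn_scaleR sgn_div_norm)
    ultimately show ?thesis using sgn_nonneg_comb_in_sarc A B by simp
  qed
qed

lemma sdist_eq_sum_if_nonneg_comb:
  fixes p r z :: R3
  assumes p: "norm p = 1" and r: "norm r = 1" and z: "norm z = 1"
    and a: "0 \<le> a" and g: "0 \<le> g" and n: "0 < n" and comb: "a *\<^sub>R p + g *\<^sub>R r = n *\<^sub>R z"
  shows "sdist p r = sdist p z + sdist z r"
proof -
  define A C where "A = sdist z p" and "C = sdist z r"
  have "a \<noteq> 0 \<or> g \<noteq> 0" using comb n z by auto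
  then have "tangent_component z p \<bullet> tangent_component z r
      = - (norm (tangent_component z p) * norm (tangent_component z r))"
    using tangent_component_nonneg_comb[OF z comb] a g by (intro inner_eq_neg_norm_mult_if_nonneg_comb_eq_0)
  then have "p \<bullet> r = cos (A + C)"
    using inner_eq_cos_sdist_tangent[OF p r z] norm_tangent_component[OF p z] norm_tangent_component[OF r z]
    by (simp add: A_def C_def cos_add)
  \<comment> \<open>The angle sum is at most \<open>pi\<close> because \<open>z\<close> makes a non-obtuse angle with \<open>p + r\<close>:
    \<open>(a p + g r) \<bullet> (p + r) = (a + g) (1 + p \<bullet> r) \<ge> 0\<close>.\<close>
  moreover have "0 \<le> n * (z \<bullet> p + z \<bullet> r)"
  proof -
    have "n * (z \<bullet> p + z \<bullet> r) = (a *\<^sub>R p + g *\<^sub>R r) \<bullet> (p + r)"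
      using comb by (simp add: inner_add_right algebra_simps)
    also have "\<dots> = (a + g) * (1 + p \<bullet> r)"
      using p r by (simp add: inner_add_left inner_add_right inner_commute dot_square_norm algebra_simps)
    finally show ?thesis using a g unit_inner_bounds[OF p r] by simp
  qed
  then have "cos (pi - C) \<le> cos A"
    using n cos_sdist[OF z p] cos_sdist[OF z r] by (simp add: A_def C_def zero_le_mult_iff)
  then have "A + C \<le> pi"
    using sdist_nonneg[OF z p] sdist_le_pi[OF z p] sdist_nonneg[OF z r] sdist_le_pi[OF z r]
    by (subst (asm) cos_mono_le_eq) (auto simp: A_def C_def)
  ultimately show ?thesis
    using sdist_nonneg[OF z p] sdist_nonneg[OF z r]
    by (simp add: sdist_def[of p r] arccos_cos A_def C_def sdist_commute[of p z])
qed

lemma sdist_eq_sum_if_in_sarc: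
  fixes p r z :: R3
  assumes p: "norm p = 1" and r: "norm r = 1" and "p \<noteq> - r" and "z \<in> sarc p r"
  shows "sdist p r = sdist p z + sdist z r"
proof -
  obtain l m where lm: "0 \<le> l" "0 \<le> m" "l + m = 1" "z = sgn (l *\<^sub>R p + m *\<^sub>R r)"
    using sarc_nonneg_combE[OF \<open>z \<in> sarc p r\<close>] .
  then have "l *\<^sub>R p + m *\<^sub>R r \<noteq> 0" using nonneg_comb_eq_0_iff[OF p r \<open>p \<noteq> - r\<close>] by auto
  then have "norm z = 1" "0 < norm (l *\<^sub>R p + m *\<^sub>R r)"
    using lm(4) by (simp_all add: norm_sgn)
  moreover have "l *\<^sub>R p + m *\<^sub>R r = norm (l *\<^sub>R p + m *\<^sub>R r) *\<^sub>R z"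
    using lm(4) scaleR_norm_sgn by metis
  ultimately show ?thesis using sdist_eq_sum_if_nonneg_comb[OF p r _ lm(1,2)] by blast
qed

lemma R3_four_vectors_dependent:
  fixes p q r s :: R3
  obtains a b c e where "a \<noteq> 0 \<or> b \<noteq> 0 \<or> c \<noteq> 0 \<or> e \<noteq> 0"
    and "a *\<^sub>R p + b *\<^sub>R q + c *\<^sub>R r + e *\<^sub>R s = 0"
proof (cases "distinct [p, q, r, s]")
  case True
  then have "dependent {p, q, r, s}" by (intro dependent_biggerset) auto
  then obtain u where "(\<Sum>v\<in>{p, q, r, s}. u v *\<^sub>R v) = 0" "\<exists>v\<in>{p, q, r, s}. u v \<noteq> 0"
    using dependent_finite[of "{p, q, r, s}"] by auto
  then show ?thesis using that[of "u p" "u q" "u r" "u s"] True by (auto simp: add.assoc)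
next
  case False
  then consider "p = q" | "p = r" | "p = s" | "q = r" | "q = s" | "r = s" by auto
  then show ?thesis
    by cases (auto intro: that[of 1 "-1" 0 0] that[of 1 0 "-1" 0] that[of 1 0 0 "-1"]
        that[of 0 1 "-1" 0] that[of 0 1 0 "-1"] that[of 0 0 1 "-1"])
qed

lemma
  fixes p q r s :: "'a::real_vector"
  assumes "a *\<^sub>R p + b *\<^sub>R q + c *\<^sub>R r + e *\<^sub>R s = 0"
  shows sum4_eq_0_swap_first: "b *\<^sub>R q + a *\<^sub>R p + c *\<^sub>R r + e *\<^sub>R s = 0"
    and sum4_eq_0_swap_second: "a *\<^sub>R p + b *\<^sub>R q + e *\<^sub>R s + c *\<^sub>R r = 0"
    and sum4_eq_0_swap_pairs: "c *\<^sub>R r + e *\<^sub>R s + a *\<^sub>R p + b *\<^sub>R q = 0"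
    and sum4_eq_0_neg: "(- a) *\<^sub>R p + (- b) *\<^sub>R q + (- c) *\<^sub>R r + (- e) *\<^sub>R s = 0"
proof -
  have "(- a) *\<^sub>R p + (- b) *\<^sub>R q + (- c) *\<^sub>R r + (- e) *\<^sub>R s
      = - (a *\<^sub>R p + b *\<^sub>R q + c *\<^sub>R r + e *\<^sub>R s)"
    by (simp add: algebra_simps)
  then show "(- a) *\<^sub>R p + (- b) *\<^sub>R q + (- c) *\<^sub>R r + (- e) *\<^sub>R s = 0"
    using assms by simp
qed (use assms in \<open>simp_all add: algebra_simps\<close>)

locale sconvex_bounded_diameter =
  fixes D :: "R3 set" and \<delta> :: real
  assumes sconvex: "sconvex D"
    and sdist_le: "x \<in> D \<Longrightarrow> y \<in> D \<Longrightarrow> sdist x y \<le> \<delta>"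
begin

lemma norm_eq_1: "x \<in> D \<Longrightarrow> norm x = 1"
  using sconvex by (auto simp: sconvex_def S2_def)

lemma not_antipodal: "x \<in> D \<Longrightarrow> y \<in> D \<Longrightarrow> x \<noteq> - y"
  using sconvex by (auto simp: sconvex_def no_antipodes_def)

lemma sarc_subset: "x \<in> D \<Longrightarrow> y \<in> D \<Longrightarrow> sarc x y \<subseteq> D"
  using sconvex by (auto simp: sconvex_def)

lemma sdist_eq_sum: "x \<in> D \<Longrightarrow> y \<in> D \<Longrightarrow> z \<in> sarc x y \<Longrightarrow> sdist x y = sdist x z + sdist z y"
  using sdist_eq_sum_if_in_sarc norm_eq_1 not_antipodal by blast

lemma diametral_endpoints_distinct:
  assumes "p \<in> D" "q \<in> D" "r \<in> D" "s \<in> D" "sdist p q = \<delta>" "sarc p q \<inter> sarc r s = {}"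
  shows "p \<noteq> q"
proof
  assume "p = q"
  then have "\<delta> = 0" using assms(1,5) sdist_eq_0_iff norm_eq_1 by blast
  then have "sdist p r = 0"
    using assms(1,3) sdist_le[of p r] sdist_nonneg[OF norm_eq_1 norm_eq_1] by force
  then have "p = r" using assms(1,3) sdist_eq_0_iff norm_eq_1 by blast
  then show False
    using assms(6) left_in_sarc[OF norm_eq_1[OF assms(1)]] left_in_sarc[OF norm_eq_1[OF assms(3)]] by blast
qed

lemma diametral_arc_not_extendable:
  assumes "p \<in> D" "w \<in> D" "sdist p q = \<delta>" "q \<in> sarc p w"
  shows "q = w"
proof -
  have "q \<in> D" using assms sarc_subset by blast
  have "sdist p q + sdist q w \<le> \<delta>"
    using sdist_eq_sum[OF assms(1,2,4)] sdist_le[OF assms(1,2)] by simp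
  then have "sdist q w = 0"
    using assms(3) sdist_nonneg[OF norm_eq_1[OF \<open>q \<in> D\<close>] norm_eq_1[OF assms(2)]] by simp
  then show ?thesis using sdist_eq_0_iff norm_eq_1 assms(2) \<open>q \<in> D\<close> by blast
qed

lemma crossing_point_on_diametral_arcs:
  assumes D: "p \<in> D" "q \<in> D" "r \<in> D" "s \<in> D" and "sdist p q = \<delta>" "sdist r s = \<delta>"
    and "z \<in> sarc p r" "z \<in> sarc q s"
  shows "z \<in> sarc p q" "z \<in> sarc r s"
proof -
  have z: "z \<in> D" using assms sarc_subset by blast
  have "sdist p z + sdist z r \<le> \<delta>" "sdist q z + sdist z s \<le> \<delta>"
    using sdist_eq_sum[of p r z] sdist_eq_sum[of q s z] sdist_le[of p r] sdist_le[of q s] assms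
    by simp_all
  moreover have "sdist p q \<le> sdist p z + sdist z q" "sdist r s \<le> sdist r z + sdist z s"
    using sdist_triangle[OF norm_eq_1 norm_eq_1 norm_eq_1] D z by blast+
  ultimately have "sdist p z + sdist z q \<le> sdist p q" "sdist r z + sdist z s \<le> sdist r s"
    using assms sdist_commute[of z q] sdist_commute[of z r] by linarith+
  then show "z \<in> sarc p q" "z \<in> sarc r s"
    using sarc_if_sdist_sum_le norm_eq_1 not_antipodal D z by blast+
qed

lemma mixed_same_signs_impossible:
  assumes D: "p \<in> D" "q \<in> D" "r \<in> D" "s \<in> D" and pq: "sdist p q = \<delta>"
    and disj: "sarc p q \<inter> sarc r s = {}"
    and rel: "a *\<^sub>R p + b *\<^sub>R q + c *\<^sub>R r + e *\<^sub>R s = 0"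
    and "a * b < 0" "0 \<le> c * e"
  shows False
proof -
  have key: False
    if "p \<in> D" "q \<in> D" "q \<notin> sarc r s" "p \<noteq> q" "sdist p q = \<delta>"
      and rel: "a *\<^sub>R p + b *\<^sub>R q + c *\<^sub>R r + e *\<^sub>R s = 0"
      and "0 < a" "b < 0" "0 \<le> c" "0 \<le> e"
    for p q a b c e
  proof (cases "c = 0 \<and> e = 0")
    case True
    then have "a *\<^sub>R p = (- b) *\<^sub>R q" using rel by (simp add: eq_neg_iff_add_eq_0)
    then have "sgn (a *\<^sub>R p) = sgn ((- b) *\<^sub>R q)" by simp
    then have "p = q" using that norm_eq_1 by (simp add: sgn_scaleR sgn_div_norm)
    with that show False by simp
  next
    case False
    define v where "v = c *\<^sub>R r + e *\<^sub>R s"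
    have w: "sgn v \<in> sarc r s"
      unfolding v_def using False that by (intro sgn_nonneg_comb_in_sarc) auto
    then have "sgn v \<in> D" using sarc_subset D(3,4) by blast
    have "a *\<^sub>R p + norm v *\<^sub>R sgn v = (- b) *\<^sub>R q"
      using rel by (simp add: scaleR_norm_sgn v_def algebra_simps eq_neg_iff_add_eq_0)
    then have "sgn (a *\<^sub>R p + norm v *\<^sub>R sgn v) = q"
      using that norm_eq_1 by (simp add: sgn_scaleR sgn_div_norm)
    then have "q \<in> sarc p (sgn v)"
      using sgn_nonneg_comb_in_sarc[of a "norm v" p "sgn v"] that
      by (simp add: add_pos_nonneg)
    then have "q = sgn v" using diametral_arc_not_extendable that \<open>sgn v \<in> D\<close> by blast
    then show False using w that by simp
  qed
  have notin: "p \<notin> sarc r s" "q \<notin> sarc r s"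
    using disj left_in_sarc right_in_sarc norm_eq_1 D by blast+
  have neq: "p \<noteq> q" "q \<noteq> p" using diametral_endpoints_distinct[OF D pq disj] by auto
  have qp: "sdist q p = \<delta>" using pq sdist_commute by metis
  have "(0 < a \<and> b < 0) \<or> (a < 0 \<and> 0 < b)" using \<open>a * b < 0\<close> by (simp add: mult_less_0_iff)
  moreover have "(0 \<le> c \<and> 0 \<le> e) \<or> (c \<le> 0 \<and> e \<le> 0)"
    using \<open>0 \<le> c * e\<close> by (simp add: zero_le_mult_iff)
  ultimately consider
      "0 < a" "b < 0" "0 \<le> c" "0 \<le> e" | "a < 0" "0 < b" "0 \<le> c" "0 \<le> e"
    | "0 < a" "b < 0" "c \<le> 0" "e \<le> 0" | "a < 0" "0 < b" "c \<le> 0" "e \<le> 0"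
    by blast
  then show False
  proof cases
    case 1
    then show False using key[OF D(1,2) notin(2) neq(1) pq rel] by simp
  next
    case 2
    then show False using key[OF D(2,1) notin(1) neq(2) qp sum4_eq_0_swap_first[OF rel]] by simp
  next
    case 3
    then show False
      using key[OF D(2,1) notin(1) neq(2) qp sum4_eq_0_swap_first[OF sum4_eq_0_neg[OF rel]]] by simp
  next
    case 4
    then show False using key[OF D(1,2) notin(2) neq(1) pq sum4_eq_0_neg[OF rel]] by simp
  qed
qed

lemma mixed_mixed_signs_impossible:
  assumes D: "p \<in> D" "q \<in> D" "r \<in> D" "s \<in> D" and pq: "sdist p q = \<delta>" and rs: "sdist r s = \<delta>"
    and disj: "sarc p q \<inter> sarc r s = {}"
    and rel: "a *\<^sub>R p + b *\<^sub>R q + c *\<^sub>R r + e *\<^sub>R s = 0"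
    and "a * b < 0" "c * e < 0"
  shows False
proof -
  have key: False
    if "r \<in> D" "s \<in> D" "sdist r s = \<delta>" "sarc p q \<inter> sarc r s = {}"
      and rel: "a *\<^sub>R p + b *\<^sub>R q + c *\<^sub>R r + e *\<^sub>R s = 0"
      and "0 < a" "b < 0" "0 < c" "e < 0"
    for r s a b c e
  proof -
    have "a *\<^sub>R p + c *\<^sub>R r = (- b) *\<^sub>R q + (- e) *\<^sub>R s"
      using rel by (simp add: algebra_simps eq_neg_iff_add_eq_0)
    moreover have "sgn (a *\<^sub>R p + c *\<^sub>R r) \<in> sarc p r"
      using that by (intro sgn_nonneg_comb_in_sarc) auto
    moreover have "sgn ((- b) *\<^sub>R q + (- e) *\<^sub>R s) \<in> sarc q s"
      using that by (intro sgn_nonneg_comb_in_sarc) auto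
    ultimately have "sgn (a *\<^sub>R p + c *\<^sub>R r) \<in> sarc p q \<inter> sarc r s"
      using crossing_point_on_diametral_arcs[OF D(1,2) that(1,2) pq that(3)] by simp
    then show False using that(4) by blast
  qed
  have sr: "sdist s r = \<delta>" using rs sdist_commute by metis
  have disj': "sarc p q \<inter> sarc s r = {}" using disj sarc_commute by metis
  have "(0 < a \<and> b < 0) \<or> (a < 0 \<and> 0 < b)" using \<open>a * b < 0\<close> by (simp add: mult_less_0_iff)
  moreover have "(0 < c \<and> e < 0) \<or> (c < 0 \<and> 0 < e)" using \<open>c * e < 0\<close> by (simp add: mult_less_0_iff)
  ultimately consider
      "0 < a" "b < 0" "0 < c" "e < 0" | "0 < a" "b < 0" "c < 0" "0 < e"
    | "a < 0" "0 < b" "0 < c" "e < 0" | "a < 0" "0 < b" "c < 0" "0 < e"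
    by blast
  then show False
  proof cases
    case 1
    then show False using key[OF D(3,4) rs disj rel] by simp
  next
    case 2
    then show False using key[OF D(4,3) sr disj' sum4_eq_0_swap_second[OF rel]] by simp
  next
    case 3
    then show False
      using key[OF D(4,3) sr disj' sum4_eq_0_swap_second[OF sum4_eq_0_neg[OF rel]]] by simp
  next
    case 4
    then show False using key[OF D(3,4) rs disj sum4_eq_0_neg[OF rel]] by simp
  qed
qed

lemma same_same_signs_impossible:
  assumes D: "p \<in> D" "q \<in> D" "r \<in> D" "s \<in> D"
    and disj: "sarc p q \<inter> sarc r s = {}"
    and rel: "a *\<^sub>R p + b *\<^sub>R q + c *\<^sub>R r + e *\<^sub>R s = 0"
    and "a \<noteq> 0 \<or> b \<noteq> 0 \<or> c \<noteq> 0 \<or> e \<noteq> 0" and "0 \<le> a * b" "0 \<le> c * e"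
  shows False
proof -
  have key: False
    if D: "p \<in> D" "q \<in> D" "r \<in> D" "s \<in> D" and disj: "sarc p q \<inter> sarc r s = {}"
      and rel: "a *\<^sub>R p + b *\<^sub>R q + c *\<^sub>R r + e *\<^sub>R s = 0"
      and "0 \<le> a" "0 \<le> b" "0 < a + b" "0 \<le> c * e"
    for p q r s a b c e
  proof -
    define v where "v = a *\<^sub>R p + b *\<^sub>R q"
    have w: "sgn v \<in> sarc p q" unfolding v_def using that by (intro sgn_nonneg_comb_in_sarc) auto
    then have "sgn v \<in> D" using sarc_subset D by blast
    then have "v \<noteq> 0" using norm_eq_1 by fastforce
    have rs: "c *\<^sub>R r + e *\<^sub>R s = - v" using rel by (simp add: v_def algebra_simps eq_neg_iff_add_eq_0)
    consider "0 \<le> c" "0 \<le> e" | "c \<le> 0" "e \<le> 0" using \<open>0 \<le> c * e\<close> by (auto simp: zero_le_mult_iff)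
    then show False
    proof cases
      case 1
      then have "0 < c + e" using rs \<open>v \<noteq> 0\<close> by (cases "c = 0 \<and> e = 0") auto
      then have "sgn (c *\<^sub>R r + e *\<^sub>R s) \<in> sarc r s" using 1 by (intro sgn_nonneg_comb_in_sarc)
      then have "- sgn v \<in> D" using rs sarc_subset D by (auto simp: sgn_minus)
      then show False using not_antipodal \<open>sgn v \<in> D\<close> by fastforce
    next
      case 2
      then have "0 < - c + - e" using rs \<open>v \<noteq> 0\<close> by (cases "c = 0 \<and> e = 0") auto
      then have "sgn ((- c) *\<^sub>R r + (- e) *\<^sub>R s) \<in> sarc r s" using 2 by (intro sgn_nonneg_comb_in_sarc) auto
      moreover have "(- c) *\<^sub>R r + (- e) *\<^sub>R s = v" using arg_cong[OF rs, of uminus] by simp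
      ultimately have "sgn v \<in> sarc r s" by simp
      then show False using w disj by blast
    qed
  qed
  have disj': "sarc r s \<inter> sarc p q = {}" using disj by blast
  have "(0 \<le> a \<and> 0 \<le> b) \<or> (a \<le> 0 \<and> b \<le> 0)" using \<open>0 \<le> a * b\<close> by (simp add: zero_le_mult_iff)
  moreover have "(0 \<le> c \<and> 0 \<le> e) \<or> (c \<le> 0 \<and> e \<le> 0)" using \<open>0 \<le> c * e\<close> by (simp add: zero_le_mult_iff)
  moreover have "0 \<le> (- a) * (- b)" "0 \<le> (- c) * (- e)" using \<open>0 \<le> a * b\<close> \<open>0 \<le> c * e\<close> by simp_all
  ultimately show False
    using key[OF D disj rel] key[OF D disj sum4_eq_0_neg[OF rel]]
      key[OF D(3,4,1,2) disj' sum4_eq_0_swap_pairs[OF rel]]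
      key[OF D(3,4,1,2) disj' sum4_eq_0_swap_pairs[OF sum4_eq_0_neg[OF rel]]]
      \<open>0 \<le> a * b\<close> \<open>0 \<le> c * e\<close> \<open>a \<noteq> 0 \<or> b \<noteq> 0 \<or> c \<noteq> 0 \<or> e \<noteq> 0\<close>
    by linarith
qed

lemma diametral_arcs_intersect:
  assumes D: "p \<in> D" "q \<in> D" "r \<in> D" "s \<in> D" and pq: "sdist p q = \<delta>" and rs: "sdist r s = \<delta>"
  shows "sarc p q \<inter> sarc r s \<noteq> {}"
proof
  assume disj: "sarc p q \<inter> sarc r s = {}"
  then have disj': "sarc r s \<inter> sarc p q = {}" by blast
  obtain a b c e where nz: "a \<noteq> 0 \<or> b \<noteq> 0 \<or> c \<noteq> 0 \<or> e \<noteq> 0"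
    and rel: "a *\<^sub>R p + b *\<^sub>R q + c *\<^sub>R r + e *\<^sub>R s = 0"
    by (rule R3_four_vectors_dependent)
  consider "a * b < 0" "c * e < 0" | "a * b < 0" "0 \<le> c * e" | "0 \<le> a * b" "c * e < 0"
    | "0 \<le> a * b" "0 \<le> c * e"
    by linarith
  then show False
  proof cases
    case 1
    then show False using mixed_mixed_signs_impossible[OF D pq rs disj rel] by simp
  next
    case 2
    then show False using mixed_same_signs_impossible[OF D pq disj rel] by simp
  next
    case 3
    then show False
      using mixed_same_signs_impossible[OF D(3,4,1,2) rs disj' sum4_eq_0_swap_pairs[OF rel]] by simp
  next
    case 4
    then show False using same_same_signs_impossible[OF D disj rel nz] by simp
  qed
qed

end

lemma sdist_le_sdiameter:
  assumes "D \<subseteq> S2" "x \<in> D" "y \<in> D"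
  shows "sdist x y \<le> sdiameter D"
  unfolding sdiameter_def
proof (rule cSup_upper)
  show "sdist x y \<in> {sdist p q |p q. p \<in> D \<and> q \<in> D}" using assms by blast
  have "sdist p q \<le> pi" if "p \<in> D" "q \<in> D" for p q
    using that assms(1) by (intro sdist_le_pi) (auto simp: S2_def)
  then show "bdd_above {sdist p q |p q. p \<in> D \<and> q \<in> D}" by (intro bdd_aboveI[where M = pi]) blast
qed

theorem proposition2:
  fixes D :: "R3 set" and \<delta> :: real
  assumes "sconvex_body D" and "const_diameter D \<delta>"
    and "diametral_chord D C1" and "diametral_chord D C2"
  shows "C1 \<inter> C2 \<noteq> {}"
proof -
  have "sconvex D" using assms(1) by (simp add: sconvex_body_def)
  then interpret sconvex_bounded_diameter D "sdiameter D"
    by unfold_locales (auto simp: sconvex_def intro: sdist_le_sdiameter)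
  obtain p q where "p \<in> D" "q \<in> D" "sdist p q = sdiameter D" "C1 = sarc p q"
    using assms(3) unfolding diametral_chord_def by blast
  moreover obtain r s where "r \<in> D" "s \<in> D" "sdist r s = sdiameter D" "C2 = sarc r s"
    using assms(4) unfolding diametral_chord_def by blast
  ultimately show ?thesis using diametral_arcs_intersect by blast
qed

end
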